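(* Let $(v,b)$ satisfy (C1) or (C2). Then every NWBTS$(v;b)$ $(V,\mathcal F)$ is an optimal data placement, i.e. $P(\mathcal F,x)\le P(\mathcal F',x)$ for every TS$(v;b)$ $(V,\mathcal F')$ and every real $x\ge 1$.
   Context: A triple system TS$(v;b)$ is a pair $(V,\mathcal F)$ where $V$ is a set of $v\ge3$ points and $\mathcal F=(B_1,\dots,B_b)$ is a multiset of $b$ 3-subsets of $V$ (blocks); repeated blocks are allowed. $P(\mathcal F,x)=\sum_{j=0}^3 v_jx^j$, where $v_j$ is the number of ordered pairs $(i,i')$, $i\ne i'$, with $|B_i\cap B_{i'}|=j$. For distinct $x_1,\dots,x_j\in V$, $\lambda_{x_1,\dots,x_j}$ is the number of blocks (with multiplicity) containing $\{x_1,\dots,x_j\}$. $(V,\mathcal F)$ is $j$-balanced if $|\lambda_{x_1,\dots,x_j}-\lambda_{y_1,\dots,y_j}|\le 1$ for any two $j$-subsets. The associated pair $(\lambda,\varepsilon)$ of $(v,b)$: integers with $3b=\lambda\binom v2+\varepsilon$, $-v/2<\varepsilon<v/2$. (C1): $v\equiv 2\pmod 3$ and $b\in\{\lfloor \lambda v(v-1)/6\rfloor,\lceil \lambda v(v-1)/6\rceil\}$ for an integer $\lambda$ with $\lambda\equiv1,2\pmod 3$ if $v\equiv5\pmod6$ and $\lambda\equiv 2,4\pmod 6$ if $v\equiv2\pmod 6$. (C2): $v$ even and $\lambda v(v-1)/6-v/6<b<\lambda v(v-1)/6+v/6$ for an odd integer $\lambda$. In both cases $\lambda$ is the $\lambda$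 of the associated pair. Defect graph: if all $\lambda_{x,y}\in\{\lambda-1,\lambda,\lambda+1\}$, the defect graph is the graph on $V$ with edges $D_1=\{\{x,y\}:\lambda_{x,y}=\lambda+1\}$ (labelled $+1$) and $D_{-1}=\{\{x,y\}:\lambda_{x,y}=\lambda-1\}$ (labelled $-1$); isomorphisms preserve labels. $G_1$: triangle, two $+1$ edges, one $-1$ edge; $G_{-1}$: triangle, one $+1$, two $-1$; $G_2$: 4-cycle, three $+1$, one $-1$; $G_{-2}$: 4-cycle, one $+1$, three $-1$. For even $v$: $H^0_{v,\varepsilon}$: perfect matching with $(v+2\varepsilon)/4$ edges $+1$ and $(v-2\varepsilon)/4$ edges $-1$; $H^1_{v,\varepsilon}$: disjoint union of a $K_{1,3}$ with two $+1$ and one $-1$ edge and a matching of the other $v-4$ vertices with $(v-6+2\varepsilon)/4$ edges $+1$, $(v-2-2\varepsilon)/4$ edges $-1$; $H^2_{v,\varepsilon}$: disjoint union of a $K_{1,3}$ with one $+1$ and two $-1$ edges and a matching of the other $v-4$ vertices with $(v-2+2\varepsilon)/4$ edges $+1$, $(v-6-2\varepsilon)/4$ edges $-1$. Nearly 2-balanced: all $\lambda_{x,y}\in\{\lambda-1,\lambda,\lambda+1\}$ and the defect graph is isomorphic to $G_\varepsilon$ under (C1); under (C2) to $H^0_{v,\varepsilon}$ if $\varepsilon\equiv v/2 \pmod 2$, and to $H^1_{v,\varepsilon}$ or $H^2_{v,\varepsilon}$ otherwise. An NWBTS$(v;b)$ is a nearly 2-balanced, 3-balanced TS$(v;b)$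 with $(v,b)$ satisfying (C1) or (C2). *)

theory Defs
  imports Complex_Main
begin

text \<open>A triple system TS(v;b) on the point set V is a list F = [B_1,...,B_b] of
  3-subsets of V (repetition allowed); v = card V, b = length F.\<close>

definition TS :: "'a set \<Rightarrow> 'a set list \<Rightarrow> bool" where
  "TS V F \<longleftrightarrow> finite V \<and> card V \<ge> 3 \<and> (\<forall>B \<in> set F. B \<subseteq> V \<and> card B = 3)"

definition Ppoly :: "'a set list \<Rightarrow> real \<Rightarrow> real" where
  "Ppoly F x = (\<Sum>i<length F. \<Sum>j<length F. if i \<noteq> j then x ^ card (F ! i \<inter> F ! j) else 0)"

definition lam :: "'a set list \<Rightarrow> 'a set \<Rightarrow> nat" where
  "lam F S = length (filter (\<lambda>B. S \<subseteq> B) F)"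

definition balanced :: "nat \<Rightarrow> 'a set \<Rightarrow> 'a set list \<Rightarrow> bool" where
  "balanced j V F \<longleftrightarrow> (\<forall>S T. S \<subseteq> V \<longrightarrow> T \<subseteq> V \<longrightarrow> card S = j \<longrightarrow> card T = j \<longrightarrow>
      \<bar>int (lam F S) - int (lam F T)\<bar> \<le> 1)"

definition assoc_pair :: "nat \<Rightarrow> nat \<Rightarrow> int \<Rightarrow> int \<Rightarrow> bool" where
  "assoc_pair v b l e \<longleftrightarrow> 3 * int b = l * int (v choose 2) + e \<and>
      - real v / 2 < real_of_int e \<and> real_of_int e < real v / 2"

definition C1 :: "nat \<Rightarrow> nat \<Rightarrow> int \<Rightarrow> bool" where
  "C1 v b l \<longleftrightarrow> v mod 3 = 2 \<and>
     (int b = \<lfloor>real_of_int l * real v * (real v - 1) / 6\<rfloor> \<or>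
      int b = \<lceil>real_of_int l * real v * (real v - 1) / 6\<rceil>) \<and>
     (v mod 6 = 5 \<longrightarrow> l mod 3 \<in> {1, 2}) \<and>
     (v mod 6 = 2 \<longrightarrow> l mod 6 \<in> {2, 4})"

definition C2 :: "nat \<Rightarrow> nat \<Rightarrow> int \<Rightarrow> bool" where
  "C2 v b l \<longleftrightarrow> even v \<and> odd l \<and>
     real_of_int l * real v * (real v - 1) / 6 - real v / 6 < real b \<and>
     real b < real_of_int l * real v * (real v - 1) / 6 + real v / 6"

definition C1_pair :: "nat \<Rightarrow> nat \<Rightarrow> bool" where
  "C1_pair v b \<longleftrightarrow> (\<exists>l. C1 v b l)"

definition C2_pair :: "nat \<Rightarrow> nat \<Rightarrow> bool" where
  "C2_pair v b \<longleftrightarrow> (\<exists>l. C2 v b l)"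

definition defect_plus :: "'a set \<Rightarrow> 'a set list \<Rightarrow> int \<Rightarrow> 'a set set" where
  "defect_plus V F l = {{x, y} | x y. x \<in> V \<and> y \<in> V \<and> x \<noteq> y \<and> int (lam F {x, y}) = l + 1}"

definition defect_minus :: "'a set \<Rightarrow> 'a set list \<Rightarrow> int \<Rightarrow> 'a set set" where
  "defect_minus V F l = {{x, y} | x y. x \<in> V \<and> y \<in> V \<and> x \<noteq> y \<and> int (lam F {x, y}) = l - 1}"

text \<open>A labelled model graph is given by a vertex set W, a set Pl of +1 edges and a set Mi
  of -1 edges (on nat).  The defect graph (on V) is isomorphic to the model if there is an
  injection f of W into V mapping the labelled edge sets exactly onto the labelled defect
  edges; all other vertices of V are isolated in the defect graph.  For models with
  card W = card V this is an ordinary label-preserving isomorphism.\<close>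

definition iso_model :: "'a set \<Rightarrow> 'a set set \<Rightarrow> 'a set set \<Rightarrow>
    nat set \<Rightarrow> nat set set \<Rightarrow> nat set set \<Rightarrow> bool" where
  "iso_model V Dp Dm W Pl Mi \<longleftrightarrow> (\<exists>f. inj_on f W \<and> f ` W \<subseteq> V \<and>
      Dp = (\<lambda>e. f ` e) ` Pl \<and> Dm = (\<lambda>e. f ` e) ` Mi)"

text \<open>G_1, G_{-1} (triangles), G_2, G_{-2} (4-cycles).\<close>

definition G_iso :: "'a set \<Rightarrow> 'a set set \<Rightarrow> 'a set set \<Rightarrow> int \<Rightarrow> bool" where
  "G_iso V Dp Dm e \<longleftrightarrow>
     (e = 1 \<and> iso_model V Dp Dm {0,1,2} {{0,1},{1,2}} {{0,2}}) \<or>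
     (e = -1 \<and> iso_model V Dp Dm {0,1,2} {{0,1}} {{1,2},{0,2}}) \<or>
     (e = 2 \<and> iso_model V Dp Dm {0,1,2,3} {{0,1},{1,2},{2,3}} {{3,0}}) \<or>
     (e = -2 \<and> iso_model V Dp Dm {0,1,2,3} {{0,1}} {{1,2},{2,3},{3,0}})"

definition match_plus :: "nat \<Rightarrow> nat \<Rightarrow> nat set set" where
  "match_plus s p = {{s + 2*i, s + 2*i + 1} | i. i < p}"

definition match_minus :: "nat \<Rightarrow> nat \<Rightarrow> nat \<Rightarrow> nat set set" where
  "match_minus s p m = {{s + 2*i, s + 2*i + 1} | i. p \<le> i \<and> i < p + m}"

text \<open>H^0_{v,e}: perfect matching on v vertices, (v+2e)/4 edges +1, (v-2e)/4 edges -1.\<close>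

definition H0_iso :: "'a set \<Rightarrow> 'a set set \<Rightarrow> 'a set set \<Rightarrow> nat \<Rightarrow> int \<Rightarrow> bool" where
  "H0_iso V Dp Dm v e \<longleftrightarrow>
     (let p = (int v + 2*e) div 4; m = (int v - 2*e) div 4 in
      4 * p = int v + 2*e \<and> 4 * m = int v - 2*e \<and> p \<ge> 0 \<and> m \<ge> 0 \<and>
      iso_model V Dp Dm {0..<v} (match_plus 0 (nat p)) (match_minus 0 (nat p) (nat m)))"

text \<open>H^1_{v,e}: K_{1,3} (center 0, leaves 1,2,3) with two +1 edges and one -1 edge, plus
  a matching of the other v-4 vertices with (v-6+2e)/4 edges +1 and (v-2-2e)/4 edges -1.\<close>

definition H1_iso :: "'a set \<Rightarrow> 'a set set \<Rightarrow> 'a set set \<Rightarrow> nat \<Rightarrow> int \<Rightarrow> bool" where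
  "H1_iso V Dp Dm v e \<longleftrightarrow>
     (let p = (int v - 6 + 2*e) div 4; m = (int v - 2 - 2*e) div 4 in
      4 * p = int v - 6 + 2*e \<and> 4 * m = int v - 2 - 2*e \<and> p \<ge> 0 \<and> m \<ge> 0 \<and>
      iso_model V Dp Dm {0..<v}
        ({{0,1},{0,2}} \<union> match_plus 4 (nat p))
        ({{0,3}} \<union> match_minus 4 (nat p) (nat m)))"

text \<open>H^2_{v,e}: K_{1,3} with one +1 edge and two -1 edges, plus a matching of the other
  v-4 vertices with (v-2+2e)/4 edges +1 and (v-6-2e)/4 edges -1.\<close>

definition H2_iso :: "'a set \<Rightarrow> 'a set set \<Rightarrow> 'a set set \<Rightarrow> nat \<Rightarrow> int \<Rightarrow> bool" where
  "H2_iso V Dp Dm v e \<longleftrightarrow>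
     (let p = (int v - 2 + 2*e) div 4; m = (int v - 6 - 2*e) div 4 in
      4 * p = int v - 2 + 2*e \<and> 4 * m = int v - 6 - 2*e \<and> p \<ge> 0 \<and> m \<ge> 0 \<and>
      iso_model V Dp Dm {0..<v}
        ({{0,1}} \<union> match_plus 4 (nat p))
        ({{0,2},{0,3}} \<union> match_minus 4 (nat p) (nat m)))"

definition nearly_2_balanced :: "'a set \<Rightarrow> 'a set list \<Rightarrow> bool" where
  "nearly_2_balanced V F \<longleftrightarrow>
     (let v = card V; b = length F in
      \<exists>l e. assoc_pair v b l e \<and>
        (\<forall>x\<in>V. \<forall>y\<in>V. x \<noteq> y \<longrightarrow> int (lam F {x, y}) \<in> {l - 1, l, l + 1}) \<and>
        ((C1 v b l \<and> G_iso V (defect_plus V F l) (defect_minus V F l) e) \<or>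
         (C2 v b l \<and>
           (if e mod 2 = int (v div 2) mod 2
            then H0_iso V (defect_plus V F l) (defect_minus V F l) v e
            else H1_iso V (defect_plus V F l) (defect_minus V F l) v e \<or>
                 H2_iso V (defect_plus V F l) (defect_minus V F l) v e))))"

definition NWBTS :: "'a set \<Rightarrow> 'a set list \<Rightarrow> bool" where
  "NWBTS V F \<longleftrightarrow> TS V F \<and> (C1_pair (card V) (length F) \<or> C2_pair (card V) (length F)) \<and>
     nearly_2_balanced V F \<and> balanced 3 V F"

end

theory Submission
  imports Defs
begin

text \<open>Writing x^c = ((x - 1) + 1)^c, P(F, x) + b x^3 becomes a sum over k \<le> 3 of
  (x - 1)^k times \<Sum>_{|S| = k} lambda_S^2, so for x \<ge> 1 it suffices to minimise each of these
  quadratic sums; their linear parts \<Sum>_{|S| = k} lambda_S = b (3 choose k) do not depend on the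
  system. Values lambda_S that are all c or c + 1 minimise a sum of squares with fixed total, which
  settles k = 3 by 3-balance and k = 1 via degree bounds in the defect graph. For k = 2 the
  defect graph gives \<Sum>(lambda_S - lambda)^2 = |D_1| + |D_-1|, to be compared with lower bounds for
  every TS(v;b): the vertex sums \<Sum>_y (lambda_xy - lambda) = 2 lambda_x - (v - 1) lambda all have
  the parity of (v - 1) lambda. Under (C2) they are odd, so every point lies on a pair with
  lambda_S \<noteq> lambda and there are at least v/2 such pairs; under (C1) they are even, and
  a nonzero total epsilon then forces at least three. The congruence
  \<Sum>(lambda_S - lambda)^2 \<equiv> epsilon (mod 2) closes the remaining gap of one.\<close>

definition k_subsets :: "'a set \<Rightarrow> nat \<Rightarrow> 'a set set" where
  "k_subsets V k = {S. S \<subseteq> V \<and> card S = k}"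

definition incident :: "'a set set \<Rightarrow> 'a \<Rightarrow> 'a set set" where
  "incident E p = {S \<in> E. p \<in> S}"

lemma finite_k_subsets: "finite V \<Longrightarrow> finite (k_subsets V k)"
  unfolding k_subsets_def by (rule finite_subset[of _ "Pow V"]) auto

lemma card_k_subsets: "finite V \<Longrightarrow> card (k_subsets V k) = card V choose k"
  unfolding k_subsets_def by (rule n_subsets)

lemma k_subsets_2_elem:
  assumes "S \<in> k_subsets V 2"
  obtains x y where "S = {x, y}" "x \<noteq> y" "x \<in> V" "y \<in> V"
  using assms unfolding k_subsets_def by (auto simp: card_2_iff)

lemma card_incident_k_subsets_2:
  assumes "finite A" "p \<in> A"
  shows "card (incident (k_subsets A 2) p) = card A - 1"
proof -
  have "incident (k_subsets A 2) p = (\<lambda>y. {p, y}) ` (A - {p})"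
    unfolding incident_def k_subsets_def
    using assms by (auto simp: card_2_iff)
  moreover have "inj_on (\<lambda>y. {p, y}) (A - {p})"
    by (auto simp: inj_on_def doubleton_eq_iff)
  ultimately show ?thesis using assms by (simp add: card_image)
qed

lemma TS_finite: "TS V F \<Longrightarrow> finite V"
  unfolding TS_def by simp

lemma TS_blockD:
  assumes "TS V F" "i < length F"
  shows "F ! i \<subseteq> V" "card (F ! i) = 3" "finite (F ! i)"
  using assms nth_mem[OF assms(2)] unfolding TS_def by (auto intro: card_ge_0_finite)

lemma lam_eq_sum: "lam F S = (\<Sum>i<length F. if S \<subseteq> F ! i then 1 else 0)"
  unfolding lam_def length_filter_conv_card
  by (simp add: sum.If_cases lessThan_def Collect_conj_eq Int_commute)

lemma sum_indicator_eq_card: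
  "finite A \<Longrightarrow> (\<Sum>x\<in>A. if P x then 1 else 0) = of_nat (card {x \<in> A. P x})"
  by (simp add: sum.If_cases Int_def)

lemma card_k_subsets_within:
  assumes "finite V" "B \<subseteq> V" 
  shows "card {S \<in> k_subsets V k. S \<subseteq> B} = card B choose k"
proof -
  have "{S \<in> k_subsets V k. S \<subseteq> B} = k_subsets B k"
    using assms(2) unfolding k_subsets_def by auto
  then show ?thesis using assms by (simp add: card_k_subsets finite_subset)
qed

lemma sum_lam_k_subsets:
  assumes "TS V F"
  shows "(\<Sum>S\<in>k_subsets V k. lam F S) = length F * (3 choose k)"
proof -
  have fin: "finite V" using assms by (rule TS_finite)
  have "(\<Sum>S\<in>k_subsets V k. lam F S)
      = (\<Sum>i<length F. \<Sum>S\<in>k_subsets V k. if S \<subseteq> F ! i then 1 else 0)"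
    unfolding lam_eq_sum by (rule sum.swap)
  also have "\<dots> = (\<Sum>i<length F. 3 choose k)"
    using fin TS_blockD[OF assms]
    by (intro sum.cong refl)
      (simp add: sum_indicator_eq_card finite_k_subsets card_k_subsets_within)
  finally show ?thesis by simp
qed

lemma sum_choose_card_inter_eq_sum_sq_lam:
  assumes "TS V F"
  shows "(\<Sum>i<length F. \<Sum>j<length F. card (F ! i \<inter> F ! j) choose k)
    = (\<Sum>S\<in>k_subsets V k. (lam F S)\<^sup>2)"
proof -
  have fin: "finite V" using assms by (rule TS_finite)
  have "(\<Sum>S\<in>k_subsets V k. (lam F S)\<^sup>2)
      = (\<Sum>S\<in>k_subsets V k. \<Sum>i<length F. \<Sum>j<length F. if S \<subseteq> F ! i \<inter> F ! j then 1 else 0)"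
    unfolding power2_eq_square lam_eq_sum sum_product by (intro sum.cong refl) auto
  also have "\<dots> = (\<Sum>i<length F. \<Sum>j<length F. \<Sum>S\<in>k_subsets V k. if S \<subseteq> F ! i \<inter> F ! j then 1 else 0)"
    by (simp add: sum.swap[of _ "k_subsets V k"])
  also have "\<dots> = (\<Sum>i<length F. \<Sum>j<length F. card (F ! i \<inter> F ! j) choose k)"
  proof (intro sum.cong refl)
    fix i j assume "i \<in> {..<length F}"
    then have sub: "F ! i \<inter> F ! j \<subseteq> V" using TS_blockD(1)[OF assms] by auto
    show "(\<Sum>S\<in>k_subsets V k. if S \<subseteq> F ! i \<inter> F ! j then 1 else 0) = card (F ! i \<inter> F ! j) choose k"
      using card_k_subsets_within[OF fin sub, of k]
      by (simp only: sum_indicator_eq_card[OF finite_k_subsets[OF fin]] of_nat_id)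
  qed
  finally show ?thesis by simp
qed

lemma power_eq_sum_choose_mult_power_minus_1:
  fixes x :: "'a::comm_ring_1"
  assumes "c \<le> n"
  shows "x ^ c = (\<Sum>k\<le>n. of_nat (c choose k) * (x - 1) ^ k)"
proof -
  have "x ^ c = (\<Sum>k\<le>c. of_nat (c choose k) * (x - 1) ^ k)"
    using binomial_ring[of "x - 1" 1 c] by simp
  also have "\<dots> = (\<Sum>k\<le>n. of_nat (c choose k) * (x - 1) ^ k)"
    using assms by (intro sum.mono_neutral_left) (auto simp: binomial_eq_0)
  finally show ?thesis .
qed

lemma Ppoly_eq_sum_power_card_inter:
  assumes "TS V F"
  shows "Ppoly F x
    = (\<Sum>i<length F. \<Sum>j<length F. x ^ card (F ! i \<inter> F ! j)) - real (length F) * x ^ 3"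
proof -
  have "(\<Sum>j<length F. if i \<noteq> j then x ^ card (F ! i \<inter> F ! j) else 0)
      = (\<Sum>j<length F. x ^ card (F ! i \<inter> F ! j)) - x ^ 3"
    if i: "i < length F" for i
  proof -
    have "(\<Sum>j<length F. if i \<noteq> j then x ^ card (F ! i \<inter> F ! j) else 0)
        = (\<Sum>j\<in>{..<length F} - {i}. x ^ card (F ! i \<inter> F ! j))"
      by (intro sum.mono_neutral_cong_right) auto
    also have "\<dots> = (\<Sum>j<length F. x ^ card (F ! i \<inter> F ! j)) - x ^ card (F ! i)"
      using i by (simp add: sum.remove)
    finally show ?thesis using TS_blockD(2)[OF assms i] by simp
  qed
  then show ?thesis unfolding Ppoly_def by (simp add: sum_subtractf)
qed

lemma Ppoly_eq_sum_sq_lam: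
  fixes x :: real
  assumes "TS V F"
  shows "Ppoly F x = (\<Sum>k\<le>3. (x - 1) ^ k * real (\<Sum>S\<in>k_subsets V k. (lam F S)\<^sup>2))
    - real (length F) * x ^ 3"
proof -
  let ?c = "\<lambda>i j. card (F ! i \<inter> F ! j)"
  have "?c i j \<le> 3" if "i < length F" for i j
    using TS_blockD[OF assms that] by (metis Int_lower1 card_mono)
  then have "(\<Sum>i<length F. \<Sum>j<length F. x ^ ?c i j)
      = (\<Sum>i<length F. \<Sum>j<length F. \<Sum>k\<le>3. real (?c i j choose k) * (x - 1) ^ k)"
    by (intro sum.cong refl power_eq_sum_choose_mult_power_minus_1) auto
  also have "\<dots> = (\<Sum>k\<le>3. (x - 1) ^ k * real (\<Sum>i<length F. \<Sum>j<length F. ?c i j choose k))"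
    by (simp add: sum.swap[of _ "{..3::nat}"] sum_distrib_left mult.commute)
  also have "\<dots> = (\<Sum>k\<le>3. (x - 1) ^ k * real (\<Sum>S\<in>k_subsets V k. (lam F S)\<^sup>2))"
    using sum_choose_card_inter_eq_sum_sq_lam[OF assms] by simp
  finally show ?thesis using Ppoly_eq_sum_power_card_inter[OF assms] by simp
qed

lemma Ppoly_le_of_sum_sq_lam_le:
  fixes x :: real
  assumes "TS V F" "TS V F'" "length F' = length F" "x \<ge> 1"
    and "\<And>k. k \<le> 3 \<Longrightarrow> (\<Sum>S\<in>k_subsets V k. (lam F S)\<^sup>2) \<le> (\<Sum>S\<in>k_subsets V k. (lam F' S)\<^sup>2)"
  shows "Ppoly F x \<le> Ppoly F' x"
  unfolding Ppoly_eq_sum_sq_lam[OF assms(1)] Ppoly_eq_sum_sq_lam[OF assms(2)] assms(3)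
  using assms(4) by (intro diff_right_mono sum_mono mult_left_mono of_nat_mono assms(5)) auto

definition near_constant :: "('b \<Rightarrow> int) \<Rightarrow> 'b set \<Rightarrow> bool" where
  "near_constant f A \<longleftrightarrow> (\<exists>c. \<forall>x\<in>A. f x = c \<or> f x = c + 1)"

lemma near_constant_if_diff_le_1:
  assumes "finite A" "\<And>x y. x \<in> A \<Longrightarrow> y \<in> A \<Longrightarrow> \<bar>f x - f y\<bar> \<le> 1"
  shows "near_constant f A"
proof (cases "A = {}")
  case False
  then have "Min (f ` A) \<in> f ` A" "\<forall>x\<in>A. Min (f ` A) \<le> f x"
    using assms(1) by simp_all
  then show ?thesis
    unfolding near_constant_def using assms(2) by (force intro!: exI[of _ "Min (f ` A)"])
qed (simp add: near_constant_def)

text \<open>The parity hypothesis rules out both endpoints for the even number 2 f x.\<close>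

lemma near_constant_if_double_within:
  fixes f :: "'b \<Rightarrow> int"
  assumes "\<And>x. x \<in> A \<Longrightarrow> X - int b \<le> 2 * f x \<and> 2 * f x \<le> X + int a"
    and "a + b = 4" "odd (X + int b)"
  shows "near_constant f A"
  unfolding near_constant_def
proof (intro exI ballI)
  fix x assume "x \<in> A"
  then have "X - int b \<le> 2 * f x \<and> 2 * f x \<le> X + int a" by (rule assms(1))
  then show "f x = (X - int b + 1) div 2 \<or> f x = (X - int b + 1) div 2 + 1"
    using assms(2,3) by presburger
qed

lemma sum_power2_shift_le_iff:
  fixes f g :: "'b \<Rightarrow> int"
  assumes "sum f A = sum g A"
  shows "(\<Sum>x\<in>A. (f x - c)\<^sup>2) \<le> (\<Sum>x\<in>A. (g x - c)\<^sup>2) \<longleftrightarrow>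
    (\<Sum>x\<in>A. (f x)\<^sup>2) \<le> (\<Sum>x\<in>A. (g x)\<^sup>2)"
proof -
  have "(\<Sum>x\<in>A. (h x - c)\<^sup>2) = (\<Sum>x\<in>A. (h x)\<^sup>2) - 2 * c * sum h A + of_nat (card A) * c\<^sup>2"
    for h :: "'b \<Rightarrow> int"
    by (simp add: power2_diff sum.distrib sum_subtractf flip: sum_distrib_left sum_distrib_right)
  then show ?thesis using assms by simp
qed

lemma int_le_power2: "(t::int) \<le> t\<^sup>2"
  by (cases "t \<le> 0") (auto simp: power2_eq_square intro: order_trans[OF _ zero_le_square])

lemma sum_power2_le_if_near_constant:
  fixes f g :: "'b \<Rightarrow> int"
  assumes "near_constant f A" "sum f A = sum g A"
  shows "(\<Sum>x\<in>A. (f x)\<^sup>2) \<le> (\<Sum>x\<in>A. (g x)\<^sup>2)"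
proof -
  obtain c where c: "\<forall>x\<in>A. f x = c \<or> f x = c + 1"
    using assms(1) unfolding near_constant_def by blast
  have "(\<Sum>x\<in>A. (f x - c)\<^sup>2) = (\<Sum>x\<in>A. f x - c)"
    using c by (intro sum.cong) auto
  also have "\<dots> = (\<Sum>x\<in>A. g x - c)"
    using assms(2) by (simp add: sum_subtractf)
  also have "\<dots> \<le> (\<Sum>x\<in>A. (g x - c)\<^sup>2)"
    by (intro sum_mono) (simp add: int_le_power2)
  finally show ?thesis using sum_power2_shift_le_iff[OF assms(2)] by blast
qed

lemma even_sum_power2_diff_sum:
  fixes D :: "'b \<Rightarrow> int"
  shows "even ((\<Sum>x\<in>A. (D x)\<^sup>2) - sum D A)"
  by (simp add: sum_subtractf[symmetric] dvd_sum power2_eq_square)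

lemma card_support_le_sum_power2:
  fixes D :: "'b \<Rightarrow> int"
  assumes "finite A"
  shows "int (card {x \<in> A. D x \<noteq> 0}) \<le> (\<Sum>x\<in>A. (D x)\<^sup>2)"
proof -
  have "int (card {x \<in> A. D x \<noteq> 0}) = (\<Sum>x\<in>A. if D x \<noteq> 0 then 1 else 0)"
    using sum_indicator_eq_card[OF assms] by metis
  also have "\<dots> \<le> (\<Sum>x\<in>A. (D x)\<^sup>2)"
    by (intro sum_mono) (simp add: int_one_le_iff_zero_less)
  finally show ?thesis .
qed

lemma card_le_twice_sum_power2_if_odd_vertex_sums:
  fixes D :: "'a set \<Rightarrow> int"
  assumes fin: "finite V"
    and odd: "\<And>p. p \<in> V \<Longrightarrow> odd (sum D (incident (k_subsets V 2) p))"
  shows "int (card V) \<le> 2 * (\<Sum>S\<in>k_subsets V 2. (D S)\<^sup>2)"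
proof -
  let ?N = "{S \<in> k_subsets V 2. D S \<noteq> 0}"
  have finN: "finite ?N" and finS: "\<forall>S\<in>?N. finite S"
    using finite_k_subsets[OF fin] fin by (auto simp: k_subsets_def intro: finite_subset)
  have "V \<subseteq> \<Union>?N"
  proof
    fix p assume "p \<in> V"
    then have "sum D (incident (k_subsets V 2) p) \<noteq> 0" using odd by fastforce
    then obtain S where "S \<in> incident (k_subsets V 2) p" "D S \<noteq> 0"
      by (meson sum.neutral)
    then show "p \<in> \<Union>?N" unfolding incident_def by blast
  qed
  then have "card V \<le> card (\<Union>?N)"
    using finN finS by (intro card_mono) auto
  also have "\<dots> \<le> sum card ?N"
    by (rule card_Union_le_sum_card)
  also have "\<dots> = 2 * card ?N"
    by (simp add: k_subsets_def)
  finally show ?thesis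
    using card_support_le_sum_power2[OF finite_k_subsets[OF fin, of 2], where D = D] by linarith
qed

lemma obtain_pendant_vertex:
  assumes "finite N" "N \<noteq> {}" "card N \<le> 2" "\<And>S. S \<in> N \<Longrightarrow> card S = 2"
  obtains S p where "S \<in> N" "p \<in> S" "\<And>T. T \<in> N \<Longrightarrow> p \<in> T \<Longrightarrow> T = S"
proof -
  have "card N \<noteq> 0" using assms(1,2) by simp
  then have "card N = 1 \<or> card N = 2" using assms(3) by linarith
  then show ?thesis
  proof
    assume "card N = 1"
    then obtain S where "N = {S}" by (rule card_1_singletonE)
    moreover from this obtain p where "p \<in> S" using assms(4) by fastforce
    ultimately show ?thesis using that by blast
  next
    assume "card N = 2"
    then obtain S T where N: "N = {S, T}" "S \<noteq> T" by (meson card_2_iff)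
    then have "card S = 2" "card T = 2" using assms(4) by auto
    then have "\<not> S \<subseteq> T" using N(2) by (metis card_subset_eq card.infinite zero_neq_numeral)
    then obtain p where "p \<in> S" "p \<notin> T" by blast
    then show ?thesis using that N(1) by blast
  qed
qed

text \<open>If the support has at most two edges, all nonzero values are \<open>\<plusminus>1\<close>, and a vertex
  lying on just one support edge has an odd vertex sum.\<close>

lemma three_le_sum_power2_if_even_vertex_sums:
  fixes D :: "'a set \<Rightarrow> int"
  assumes fin: "finite V"
    and even: "\<And>p. p \<in> V \<Longrightarrow> even (sum D (incident (k_subsets V 2) p))"
    and nonzero: "sum D (k_subsets V 2) \<noteq> 0"
  shows "3 \<le> (\<Sum>S\<in>k_subsets V 2. (D S)\<^sup>2)"
proof (rule ccontr)
  let ?L = "k_subsets V 2"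
  let ?N = "{S \<in> ?L. D S \<noteq> 0}"
  assume "\<not> 3 \<le> (\<Sum>S\<in>?L. (D S)\<^sup>2)"
  then have small: "(\<Sum>S\<in>?L. (D S)\<^sup>2) \<le> 2" by simp
  have finL: "finite ?L" by (rule finite_k_subsets[OF fin])
  have unit: "D S = 1 \<or> D S = -1" if "S \<in> ?N" for S
  proof -
    have "(D S)\<^sup>2 \<le> 2"
      using that small member_le_sum[of S ?L "\<lambda>S. (D S)\<^sup>2"] finL by auto
    moreover have "D S \<noteq> 0" using that by simp
    ultimately show ?thesis
      by (smt (verit, best) mult_cancel_left1 power2_eq_square power2_le_imp_le power2_minus)
  qed
  have "?N \<noteq> {}"
  proof
    assume "?N = {}"
    then have "sum D ?L = 0" by (intro sum.neutral) blast
    then show False using nonzero by simp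
  qed
  moreover have "card ?N \<le> 2"
    using card_support_le_sum_power2[OF finL, where D = D] small by linarith
  moreover have "finite ?N" using finL by simp
  moreover have "card T = 2" if "T \<in> ?N" for T using that by (simp add: k_subsets_def)
  ultimately obtain S p where S: "S \<in> ?N" "p \<in> S" and pendant: "\<And>T. T \<in> ?N \<Longrightarrow> p \<in> T \<Longrightarrow> T = S"
    using obtain_pendant_vertex[of ?N] by blast
  have "sum D (incident ?L p) = sum D {S}"
  proof (rule sum.mono_neutral_right)
    show "finite (incident ?L p)" using finL by (simp add: incident_def)
    show "{S} \<subseteq> incident ?L p" using S by (simp add: incident_def)
    show "\<forall>T\<in>incident ?L p - {S}. D T = 0" using pendant by (auto simp: incident_def)
  qed
  then have "odd (sum D (incident ?L p))" using unit[OF S(1)] by auto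
  moreover have "p \<in> V" using S by (auto simp: k_subsets_def)
  ultimately show False using even by blast
qed

lemma sum_lam_incident_pairs:
  assumes "TS V F" "p \<in> V"
  shows "sum (lam F) (incident (k_subsets V 2) p) = 2 * lam F {p}"
proof -
  have fin: "finite V" using assms(1) by (rule TS_finite)
  have "sum (lam F) (incident (k_subsets V 2) p)
      = (\<Sum>i<length F. \<Sum>S\<in>incident (k_subsets V 2) p. if S \<subseteq> F ! i then 1 else 0)"
    unfolding lam_eq_sum by (rule sum.swap)
  also have "\<dots> = (\<Sum>i<length F. 2 * (if {p} \<subseteq> F ! i then 1 else 0))"
  proof (intro sum.cong refl)
    fix i assume "i \<in> {..<length F}"
    then have B: "F ! i \<subseteq> V" "card (F ! i) = 3" "finite (F ! i)"
      using TS_blockD[OF assms(1)] by auto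
    have "{S \<in> incident (k_subsets V 2) p. S \<subseteq> F ! i}
        = (if p \<in> F ! i then incident (k_subsets (F ! i) 2) p else {})"
      using B(1) by (auto simp: incident_def k_subsets_def)
    moreover have "finite (incident (k_subsets V 2) p)"
      using finite_k_subsets[OF fin] by (simp add: incident_def)
    ultimately show "(\<Sum>S\<in>incident (k_subsets V 2) p. if S \<subseteq> F ! i then 1 else 0)
        = 2 * (if {p} \<subseteq> F ! i then 1 else 0 :: nat)"
      using card_incident_k_subsets_2[OF B(3)] B(2) by (simp add: sum_indicator_eq_card)
  qed
  also have "\<dots> = 2 * lam F {p}"
    by (simp add: lam_eq_sum sum_distrib_left)
  finally show ?thesis .
qed

definition deviation :: "'a set list \<Rightarrow> int \<Rightarrow> 'a set \<Rightarrow> int" where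
  "deviation F l S = int (lam F S) - l"

lemma sum_deviation_incident_pairs:
  assumes "TS V F" "p \<in> V"
  shows "sum (deviation F l) (incident (k_subsets V 2) p)
    = 2 * int (lam F {p}) - (int (card V) - 1) * l"
proof -
  have "finite V" using assms(1) by (rule TS_finite)
  then have "card (incident (k_subsets V 2) p) = card V - 1"
    using assms(2) by (rule card_incident_k_subsets_2)
  moreover have "card V \<ge> 1" using assms(1) unfolding TS_def by auto
  ultimately show ?thesis
    using sum_lam_incident_pairs[OF assms]
    by (simp add: deviation_def sum_subtractf flip: of_nat_sum)
qed

lemma sum_deviation_pairs:
  assumes "TS V F" "assoc_pair (card V) (length F) l e"
  shows "sum (deviation F l) (k_subsets V 2) = e"
proof -
  have "finite V" using assms(1) by (rule TS_finite)
  moreover have "(3::nat) choose 2 = 3" by (simp add: choose_two)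
  ultimately show ?thesis
    using sum_lam_k_subsets[OF assms(1), of 2] card_k_subsets[of V 2] assms(2)
    by (simp add: deviation_def sum_subtractf assoc_pair_def algebra_simps flip: of_nat_sum)
qed

lemma sum_int_lam_eq:
  assumes "TS V F" "TS V F'" "length F' = length F"
  shows "(\<Sum>S\<in>k_subsets V k. int (lam F S)) = (\<Sum>S\<in>k_subsets V k. int (lam F' S))"
  using sum_lam_k_subsets[OF assms(1)] sum_lam_k_subsets[OF assms(2)] assms(3)
  by (simp flip: of_nat_sum)

lemma sum_sq_lam_le_if_near_constant:
  assumes "TS V F" "TS V F'" "length F' = length F"
    and "near_constant (\<lambda>S. int (lam F S)) (k_subsets V k)"
  shows "(\<Sum>S\<in>k_subsets V k. (lam F S)\<^sup>2) \<le> (\<Sum>S\<in>k_subsets V k. (lam F' S)\<^sup>2)"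
  using sum_power2_le_if_near_constant[OF assms(4) sum_int_lam_eq[OF assms(1-3)]]
  by (simp flip: of_nat_sum of_nat_power)

lemma sum_sq_lam_le_if_sum_sq_deviation_le:
  assumes "TS V F" "TS V F'" "length F' = length F"
    and "(\<Sum>S\<in>k_subsets V k. (deviation F l S)\<^sup>2) \<le> (\<Sum>S\<in>k_subsets V k. (deviation F' l S)\<^sup>2)"
  shows "(\<Sum>S\<in>k_subsets V k. (lam F S)\<^sup>2) \<le> (\<Sum>S\<in>k_subsets V k. (lam F' S)\<^sup>2)"
  using sum_power2_shift_le_iff[OF sum_int_lam_eq[OF assms(1-3)], of l] assms(4)
  by (simp add: deviation_def flip: of_nat_sum of_nat_power)

lemma defect_plus_eq: "defect_plus V F l = {S \<in> k_subsets V 2. int (lam F S) = l + 1}"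
  unfolding defect_plus_def k_subsets_def by (auto simp: card_2_iff)

lemma defect_minus_eq: "defect_minus V F l = {S \<in> k_subsets V 2. int (lam F S) = l - 1}"
  unfolding defect_minus_def k_subsets_def by (auto simp: card_2_iff)

lemma deviation_eq_defect_indicators:
  assumes "S \<in> k_subsets V 2"
    and "\<And>x y. x \<in> V \<Longrightarrow> y \<in> V \<Longrightarrow> x \<noteq> y \<Longrightarrow> int (lam F {x, y}) \<in> {l - 1, l, l + 1}"
  shows "deviation F l S = of_bool (S \<in> defect_plus V F l) - of_bool (S \<in> defect_minus V F l)"
proof -
  obtain x y where "S = {x, y}" "x \<noteq> y" "x \<in> V" "y \<in> V"
    using assms(1) by (rule k_subsets_2_elem)
  then have "int (lam F S) \<in> {l - 1, l, l + 1}" using assms(2) by blast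
  then show ?thesis
    using assms(1) by (auto simp: deviation_def defect_plus_eq defect_minus_eq)
qed

lemma sum_deviation_eq_card_defects:
  assumes "A \<subseteq> k_subsets V 2" "finite V"
    and "\<And>x y. x \<in> V \<Longrightarrow> y \<in> V \<Longrightarrow> x \<noteq> y \<Longrightarrow> int (lam F {x, y}) \<in> {l - 1, l, l + 1}"
  shows "sum (deviation F l) A
    = int (card (defect_plus V F l \<inter> A)) - int (card (defect_minus V F l \<inter> A))"
proof -
  have "finite A" using assms(1,2) finite_k_subsets finite_subset by blast
  then show ?thesis
    using deviation_eq_defect_indicators[OF subsetD[OF assms(1)] assms(3)]
    by (simp add: sum_subtractf sum.If_cases Int_def conj_commute of_bool_def)
qed

lemma sum_sq_deviation_eq_card_defects:
  assumes "finite V"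
    and "\<And>x y. x \<in> V \<Longrightarrow> y \<in> V \<Longrightarrow> x \<noteq> y \<Longrightarrow> int (lam F {x, y}) \<in> {l - 1, l, l + 1}"
  shows "(\<Sum>S\<in>k_subsets V 2. (deviation F l S)\<^sup>2)
    = int (card (defect_plus V F l)) + int (card (defect_minus V F l))"
proof -
  have "(deviation F l S)\<^sup>2 = of_bool (S \<in> defect_plus V F l) + of_bool (S \<in> defect_minus V F l)"
    if "S \<in> k_subsets V 2" for S
    using deviation_eq_defect_indicators[OF that assms(2)]
    by (auto simp: defect_plus_eq defect_minus_eq)
  then have "(\<Sum>S\<in>k_subsets V 2. (deviation F l S)\<^sup>2)
      = int (card (defect_plus V F l \<inter> k_subsets V 2))
        + int (card (defect_minus V F l \<inter> k_subsets V 2))"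
    using finite_k_subsets[OF assms(1)]
    by (simp add: sum.distrib sum.If_cases Int_def conj_commute of_bool_def)
  moreover have "defect_plus V F l \<inter> k_subsets V 2 = defect_plus V F l"
    "defect_minus V F l \<inter> k_subsets V 2 = defect_minus V F l"
    by (auto simp: defect_plus_eq defect_minus_eq)
  ultimately show ?thesis by simp
qed

lemma double_lam_point_eq_defect_degrees:
  assumes "TS V F" "p \<in> V"
    and "\<And>x y. x \<in> V \<Longrightarrow> y \<in> V \<Longrightarrow> x \<noteq> y \<Longrightarrow> int (lam F {x, y}) \<in> {l - 1, l, l + 1}"
  shows "2 * int (lam F {p}) - (int (card V) - 1) * l
    = int (card (incident (defect_plus V F l) p)) - int (card (incident (defect_minus V F l) p))"
proof -
  have "defect_plus V F l \<inter> incident (k_subsets V 2) p = incident (defect_plus V F l) p"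
    "defect_minus V F l \<inter> incident (k_subsets V 2) p = incident (defect_minus V F l) p"
    by (auto simp: incident_def defect_plus_eq defect_minus_eq)
  moreover have "incident (k_subsets V 2) p \<subseteq> k_subsets V 2"
    by (simp add: incident_def)
  ultimately show ?thesis
    using sum_deviation_incident_pairs[OF assms(1,2), of l]
      sum_deviation_eq_card_defects[OF _ TS_finite[OF assms(1)] assms(3)] by simp
qed

lemma even_sum_sq_deviation_diff:
  assumes "TS V F" "assoc_pair (card V) (length F) l e"
  shows "even ((\<Sum>S\<in>k_subsets V 2. (deviation F l S)\<^sup>2) - e)"
  using even_sum_power2_diff_sum[of "deviation F l" "k_subsets V 2"]
    sum_deviation_pairs[OF assms] by simp

lemma iso_model_card_le:
  assumes "iso_model V Dp Dm W Pl Mi" "finite Pl" "finite Mi"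
  shows "card Dp \<le> card Pl \<and> card Dm \<le> card Mi"
  using assms unfolding iso_model_def by (auto intro: card_image_le)

lemma card_incident_image_le:
  assumes inj: "inj_on f W" and "\<Union>E \<subseteq> W" "finite E"
    and deg: "\<And>w. w \<in> W \<Longrightarrow> card (incident E w) \<le> K"
  shows "card (incident ((\<lambda>S. f ` S) ` E) p) \<le> K"
proof (cases "p \<in> f ` W")
  case True
  then obtain w where w: "w \<in> W" "p = f w" by blast
  have "incident ((\<lambda>S. f ` S) ` E) p \<subseteq> (\<lambda>S. f ` S) ` incident E w"
  proof
    fix T assume "T \<in> incident ((\<lambda>S. f ` S) ` E) p"
    then obtain S u where "S \<in> E" "T = f ` S" "u \<in> S" "f u = f w"
      using w(2) by (auto simp: incident_def)
    moreover from this have "u \<in> W" using assms(2) by blast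
    then have "u = w" using inj_onD[OF inj \<open>f u = f w\<close>] w(1) by simp
    ultimately show "T \<in> (\<lambda>S. f ` S) ` incident E w" by (auto simp: incident_def)
  qed
  moreover have "finite (incident E w)" using assms(3) by (simp add: incident_def)
  ultimately have "card (incident ((\<lambda>S. f ` S) ` E) p) \<le> card ((\<lambda>S. f ` S) ` incident E w)"
    by (intro card_mono) simp_all
  also have "\<dots> \<le> card (incident E w)" by (rule card_image_le) fact
  finally show ?thesis using deg[OF w(1)] by linarith
next
  case False
  then have "incident ((\<lambda>S. f ` S) ` E) p = {}"
    using assms(2) by (auto simp: incident_def)
  then show ?thesis by simp
qed

lemma iso_model_card_incident_le:
  assumes "iso_model V Dp Dm W Pl Mi" "finite Pl" "finite Mi" "\<Union>Pl \<subseteq> W" "\<Union>Mi \<subseteq> W"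
    and "\<And>w. w \<in> W \<Longrightarrow> card (incident Pl w) \<le> K" "\<And>w. w \<in> W \<Longrightarrow> card (incident Mi w) \<le> K"
  shows "card (incident Dp p) \<le> K" "card (incident Dm p) \<le> K"
  using assms card_incident_image_le[of _ W] unfolding iso_model_def by metis+

lemma G_iso_card_defects:
  assumes "G_iso V Dp Dm e"
  shows "(e = 1 \<and> card Dp \<le> 2 \<and> card Dm \<le> 1) \<or> (e = -1 \<and> card Dp \<le> 1 \<and> card Dm \<le> 2) \<or>
    (e = 2 \<and> card Dp \<le> 3 \<and> card Dm \<le> 1) \<or> (e = -2 \<and> card Dp \<le> 1 \<and> card Dm \<le> 3)"
  using assms unfolding G_iso_def
  by (auto dest!: iso_model_card_le simp: doubleton_eq_iff)

definition pair_edges :: "nat \<Rightarrow> nat set \<Rightarrow> nat set set" where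
  "pair_edges s I = (\<lambda>i. {s + 2 * i, s + 2 * i + 1}) ` I"

lemma match_plus_eq: "match_plus s p = pair_edges s {..<p}"
  unfolding match_plus_def pair_edges_def by auto

lemma match_minus_eq: "match_minus s p m = pair_edges s {p..<p + m}"
  unfolding match_minus_def pair_edges_def by auto

lemma card_incident_pair_edges_le: "card (incident (pair_edges s I) w) \<le> 1"
proof -
  define i where "i = (w - s) div 2"
  have "incident (pair_edges s I) w \<subseteq> {{s + 2 * i, s + 2 * i + 1}}"
  proof
    fix E assume "E \<in> incident (pair_edges s I) w"
    then obtain j where j: "E = {s + 2 * j, s + 2 * j + 1}" "w \<in> E"
      unfolding incident_def pair_edges_def by blast
    then have "w = s + 2 * j \<or> w = s + 2 * j + 1" by blast
    then have "i = j" unfolding i_def by auto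
    then show "E \<in> {{s + 2 * i, s + 2 * i + 1}}" using j(1) by simp
  qed
  from card_mono[OF _ this] show ?thesis by simp
qed

text \<open>The models H^0, H^1, H^2 consist of at most two +1 and two -1 edges on the
  vertices below s, plus a matching on the vertices from s on.\<close>

lemma card_incident_union_pair_edges_le:
  assumes "finite A" "card A \<le> 2" "\<Union>A \<subseteq> {..<s}"
  shows "card (incident (A \<union> pair_edges s I) w) \<le> 2"
proof (cases "w < s")
  case True
  then have "incident (A \<union> pair_edges s I) w \<subseteq> A"
    unfolding incident_def pair_edges_def by auto
  from card_mono[OF assms(1) this] show ?thesis using assms(2) by linarith
next
  case False
  then have "incident (A \<union> pair_edges s I) w = incident (pair_edges s I) w"
    using assms(3) unfolding incident_def by auto
  then show ?thesis using card_incident_pair_edges_le[of s I w] by simp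
qed

lemma block_matching_model_bounds:
  assumes iso: "iso_model V Dp Dm {0..<v} (A \<union> pair_edges s {..<P}) (B \<union> pair_edges s {P..<P + M})"
    and v: "v = s + 2 * (P + M)"
    and A: "finite A" "card A \<le> 2" "\<Union>A \<subseteq> {..<s}"
    and B: "finite B" "card B \<le> 2" "\<Union>B \<subseteq> {..<s}"
  shows "card (incident Dp q) \<le> 2" "card (incident Dm q) \<le> 2"
    and "card Dp + card Dm \<le> card A + card B + P + M"
proof -
  have fin: "finite (A \<union> pair_edges s {..<P})" "finite (B \<union> pair_edges s {P..<P + M})"
    using A(1) B(1) by (simp_all add: pair_edges_def)
  have sub: "\<Union>(A \<union> pair_edges s {..<P}) \<subseteq> {0..<v}" "\<Union>(B \<union> pair_edges s {P..<P + M}) \<subseteq> {0..<v}"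
    using A(3) B(3) v by (auto simp: pair_edges_def)
  show "card (incident Dp q) \<le> 2" "card (incident Dm q) \<le> 2"
    using iso_model_card_incident_le[OF iso fin sub] card_incident_union_pair_edges_le A B by blast+
  have pairs: "card (pair_edges s I) \<le> card I" if "finite I" for I
    unfolding pair_edges_def using that by (rule card_image_le)
  have "card (A \<union> pair_edges s {..<P}) \<le> card A + P"
    using card_Un_le[of A "pair_edges s {..<P}"] pairs[of "{..<P}"] by simp
  moreover have "card (B \<union> pair_edges s {P..<P + M}) \<le> card B + M"
    using card_Un_le[of B "pair_edges s {P..<P + M}"] pairs[of "{P..<P + M}"] by simp
  ultimately show "card Dp + card Dm \<le> card A + card B + P + M"
    using iso_model_card_le[OF iso fin] by linarith
qed

lemma H0_iso_bounds:
  assumes "H0_iso V Dp Dm v e"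
  shows "card (incident Dp q) \<le> 2" "card (incident Dm q) \<le> 2" "2 * (card Dp + card Dm) \<le> v"
proof -
  define P where "P = nat ((int v + 2 * e) div 4)"
  define M where "M = nat ((int v - 2 * e) div 4)"
  have iso: "iso_model V Dp Dm {0..<v} ({} \<union> pair_edges 0 {..<P}) ({} \<union> pair_edges 0 {P..<P + M})"
    and "int v = 2 * (int P + int M)"
    using assms unfolding H0_iso_def Let_def P_def M_def match_plus_eq match_minus_eq by auto
  then have v: "v = 0 + 2 * (P + M)" by presburger
  note bounds = block_matching_model_bounds[OF iso v, simplified]
  show "card (incident Dp q) \<le> 2" "card (incident Dm q) \<le> 2" "2 * (card Dp + card Dm) \<le> v"
    using bounds v by auto
qed

lemma H1_iso_bounds:
  assumes "H1_iso V Dp Dm v e"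
  shows "card (incident Dp q) \<le> 2" "card (incident Dm q) \<le> 2" "2 * (card Dp + card Dm) \<le> v + 2"
proof -
  define P where "P = nat ((int v - 6 + 2 * e) div 4)"
  define M where "M = nat ((int v - 2 - 2 * e) div 4)"
  have iso: "iso_model V Dp Dm {0..<v} ({{0, 1}, {0, 2}} \<union> pair_edges 4 {..<P})
      ({{0, 3}} \<union> pair_edges 4 {P..<P + M})"
    and "int v = 4 + 2 * (int P + int M)"
    using assms unfolding H1_iso_def Let_def P_def M_def match_plus_eq match_minus_eq by auto
  then have v: "v = 4 + 2 * (P + M)" by presburger
  note bounds = block_matching_model_bounds[OF iso v]
  show "card (incident Dp q) \<le> 2" "card (incident Dm q) \<le> 2" "2 * (card Dp + card Dm) \<le> v + 2"
    using bounds v by (auto simp: doubleton_eq_iff)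
qed

lemma H2_iso_bounds:
  assumes "H2_iso V Dp Dm v e"
  shows "card (incident Dp q) \<le> 2" "card (incident Dm q) \<le> 2" "2 * (card Dp + card Dm) \<le> v + 2"
proof -
  define P where "P = nat ((int v - 2 + 2 * e) div 4)"
  define M where "M = nat ((int v - 6 - 2 * e) div 4)"
  have iso: "iso_model V Dp Dm {0..<v} ({{0, 1}} \<union> pair_edges 4 {..<P})
      ({{0, 2}, {0, 3}} \<union> pair_edges 4 {P..<P + M})"
    and "int v = 4 + 2 * (int P + int M)"
    using assms unfolding H2_iso_def Let_def P_def M_def match_plus_eq match_minus_eq by auto
  then have v: "v = 4 + 2 * (P + M)" by presburger
  note bounds = block_matching_model_bounds[OF iso v]
  show "card (incident Dp q) \<le> 2" "card (incident Dm q) \<le> 2" "2 * (card Dp + card Dm) \<le> v + 2"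
    using bounds v by (auto simp: doubleton_eq_iff)
qed

context
  fixes V :: "'a set" and F F' :: "'a set list" and l e :: int
  assumes TS: "TS V F" and TS': "TS V F'" and len: "length F' = length F"
    and assoc: "assoc_pair (card V) (length F) l e"
    and range: "\<And>x y. x \<in> V \<Longrightarrow> y \<in> V \<Longrightarrow> x \<noteq> y \<Longrightarrow> int (lam F {x, y}) \<in> {l - 1, l, l + 1}"
begin

lemma C1_near_optimal:
  assumes "C1 (card V) (length F) l" "G_iso V (defect_plus V F l) (defect_minus V F l) e"
  shows "near_constant (\<lambda>p. int (lam F {p})) V"
    and "(\<Sum>S\<in>k_subsets V 2. (deviation F l S)\<^sup>2) \<le> (\<Sum>S\<in>k_subsets V 2. (deviation F' l S)\<^sup>2)"
proof -
  let ?X = "(int (card V) - 1) * l"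
  let ?Dp = "defect_plus V F l" and ?Dm = "defect_minus V F l"
  have fin: "finite ?Dp" "finite ?Dm"
    using finite_k_subsets[OF TS_finite[OF TS]] by (auto simp: defect_plus_eq defect_minus_eq)
  have "card V mod 3 = 2" "card V mod 6 = 2 \<longrightarrow> l mod 6 \<in> {2, 4}"
    using assms(1) unfolding C1_def by auto
  then have X_even: "even ?X" by auto presburger+
  note cards = G_iso_card_defects[OF assms(2)]
  have "3 \<le> (\<Sum>S\<in>k_subsets V 2. (deviation F' l S)\<^sup>2)"
    using three_le_sum_power2_if_even_vertex_sums[OF TS_finite[OF TS]]
      sum_deviation_incident_pairs[OF TS'] sum_deviation_pairs[OF TS'] assoc len cards X_even
    by auto
  \<comment> \<open>For e = \<plusminus>2 the lower bound 3 improves to 4 by parity.\<close>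
  then show "(\<Sum>S\<in>k_subsets V 2. (deviation F l S)\<^sup>2) \<le> (\<Sum>S\<in>k_subsets V 2. (deviation F' l S)\<^sup>2)"
    using sum_sq_deviation_eq_card_defects[OF TS_finite[OF TS] range]
      even_sum_sq_deviation_diff[OF TS' assoc[folded len]] cards
    by auto presburger+
  have degrees: "card (incident ?Dp p) \<le> card ?Dp" "card (incident ?Dm p) \<le> card ?Dm" for p
    using fin by (auto simp: incident_def intro: card_mono)
  have points: "?X - int b \<le> 2 * int (lam F {p}) \<and> 2 * int (lam F {p}) \<le> ?X + int a"
    if "card ?Dp \<le> a" "card ?Dm \<le> b" "p \<in> V" for a b p
    using double_lam_point_eq_defect_degrees[OF TS that(3) range] degrees[of p] that(1,2)
    by linarith
  show "near_constant (\<lambda>p. int (lam F {p})) V"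
  proof (cases "card ?Dm \<le> 1")
    case True
    then have "card ?Dp \<le> 3" using cards by auto
    then show ?thesis
      using points[of 3 1] True X_even
      by (intro near_constant_if_double_within[where a = 3 and b = 1 and X = ?X]) auto
  next
    case False
    then have "card ?Dp \<le> 1" "card ?Dm \<le> 3" using cards by auto
    then show ?thesis
      using points[of 1 3] X_even
      by (intro near_constant_if_double_within[where a = 1 and b = 3 and X = ?X]) auto
  qed
qed

lemma C2_near_optimal:
  assumes "C2 (card V) (length F) l"
    and "if e mod 2 = int (card V div 2) mod 2
      then H0_iso V (defect_plus V F l) (defect_minus V F l) (card V) e
      else H1_iso V (defect_plus V F l) (defect_minus V F l) (card V) e \<or>
        H2_iso V (defect_plus V F l) (defect_minus V F l) (card V) e"
  shows "near_constant (\<lambda>p. int (lam F {p})) V"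
    and "(\<Sum>S\<in>k_subsets V 2. (deviation F l S)\<^sup>2) \<le> (\<Sum>S\<in>k_subsets V 2. (deviation F' l S)\<^sup>2)"
proof -
  let ?X = "(int (card V) - 1) * l"
  let ?Dp = "defect_plus V F l" and ?Dm = "defect_minus V F l"
  have v_even: "even (card V)" and "odd l"
    using assms(1) unfolding C2_def by auto
  then have X_odd: "odd ?X" using TS unfolding TS_def by auto
  have "(\<forall>p. card (incident ?Dp p) \<le> 2 \<and> card (incident ?Dm p) \<le> 2) \<and>
    2 * (card ?Dp + card ?Dm) \<le> (if e mod 2 = int (card V div 2) mod 2 then card V else card V + 2)"
  proof (cases "e mod 2 = int (card V div 2) mod 2")
    case True
    with assms(2) have "H0_iso V ?Dp ?Dm (card V) e" by simp
    from H0_iso_bounds[OF this] show ?thesis using True by simp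
  next
    case False
    with assms(2) have "H1_iso V ?Dp ?Dm (card V) e \<or> H2_iso V ?Dp ?Dm (card V) e" by simp
    then show ?thesis using False by (auto dest: H1_iso_bounds H2_iso_bounds)
  qed
  then have degrees: "\<forall>p. card (incident ?Dp p) \<le> 2 \<and> card (incident ?Dm p) \<le> 2"
    and total: "2 * (card ?Dp + card ?Dm)
      \<le> (if e mod 2 = int (card V div 2) mod 2 then card V else card V + 2)"
    by blast+
  have "int (card V) \<le> 2 * (\<Sum>S\<in>k_subsets V 2. (deviation F' l S)\<^sup>2)"
    using card_le_twice_sum_power2_if_odd_vertex_sums[OF TS_finite[OF TS]]
      sum_deviation_incident_pairs[OF TS'] X_odd by auto
  \<comment> \<open>Under H^1 and H^2, e and v/2 differ in parity, so the bound v/2 improves by one.\<close>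
  then show "(\<Sum>S\<in>k_subsets V 2. (deviation F l S)\<^sup>2) \<le> (\<Sum>S\<in>k_subsets V 2. (deviation F' l S)\<^sup>2)"
    using total sum_sq_deviation_eq_card_defects[OF TS_finite[OF TS] range]
      even_sum_sq_deviation_diff[OF TS' assoc[folded len]] v_even
    by (simp split: if_splits) presburger+
  show "near_constant (\<lambda>p. int (lam F {p})) V"
  proof (rule near_constant_if_double_within[where a = 2 and b = 2 and X = ?X])
    fix p assume "p \<in> V"
    moreover have "card (incident ?Dp p) \<le> 2" "card (incident ?Dm p) \<le> 2"
      using degrees by blast+
    ultimately show "?X - int 2 \<le> 2 * int (lam F {p}) \<and> 2 * int (lam F {p}) \<le> ?X + int 2"
      using double_lam_point_eq_defect_degrees[OF TS _ range, of p] by linarith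
  qed (use X_odd in simp_all)
qed

end

lemma near_constant_k_subsets_0:
  assumes "finite V"
  shows "near_constant f (k_subsets V 0)"
proof -
  have "k_subsets V 0 = {{}}"
    using assms finite_subset by (fastforce simp: k_subsets_def)
  then show ?thesis by (auto simp: near_constant_def)
qed

lemma near_constant_k_subsets_1:
  "near_constant (\<lambda>p. f {p}) V \<Longrightarrow> near_constant f (k_subsets V 1)"
  unfolding near_constant_def k_subsets_def by (auto simp: card_1_singleton_iff)

lemma near_constant_if_balanced:
  assumes "TS V F" "balanced k V F"
  shows "near_constant (\<lambda>S. int (lam F S)) (k_subsets V k)"
  using assms unfolding TS_def balanced_def k_subsets_def
  by (intro near_constant_if_diff_le_1) (auto intro: finite_k_subsets[unfolded k_subsets_def])

lemma nearly_2_balanced_near_optimal: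
  assumes "TS V F" "TS V F'" "length F' = length F" "nearly_2_balanced V F"
  shows "near_constant (\<lambda>S. int (lam F S)) (k_subsets V 1)"
    and "(\<Sum>S\<in>k_subsets V 2. (lam F S)\<^sup>2) \<le> (\<Sum>S\<in>k_subsets V 2. (lam F' S)\<^sup>2)"
proof -
  obtain l e where assoc: "assoc_pair (card V) (length F) l e"
    and range: "\<forall>x\<in>V. \<forall>y\<in>V. x \<noteq> y \<longrightarrow> int (lam F {x, y}) \<in> {l - 1, l, l + 1}"
    and defect: "(C1 (card V) (length F) l \<and> G_iso V (defect_plus V F l) (defect_minus V F l) e) \<or>
      (C2 (card V) (length F) l \<and>
        (if e mod 2 = int (card V div 2) mod 2
         then H0_iso V (defect_plus V F l) (defect_minus V F l) (card V) e
         else H1_iso V (defect_plus V F l) (defect_minus V F l) (card V) e \<or>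
           H2_iso V (defect_plus V F l) (defect_minus V F l) (card V) e))"
    using assms(4) unfolding nearly_2_balanced_def Let_def by blast
  note C1 = C1_near_optimal[OF assms(1-3) assoc range[rule_format]]
  note C2 = C2_near_optimal[OF assms(1-3) assoc range[rule_format]]
  have "near_constant (\<lambda>p. int (lam F {p})) V \<and>
    (\<Sum>S\<in>k_subsets V 2. (deviation F l S)\<^sup>2) \<le> (\<Sum>S\<in>k_subsets V 2. (deviation F' l S)\<^sup>2)"
    using defect C1 C2 by blast
  then show "near_constant (\<lambda>S. int (lam F S)) (k_subsets V 1)"
    and "(\<Sum>S\<in>k_subsets V 2. (lam F S)\<^sup>2) \<le> (\<Sum>S\<in>k_subsets V 2. (lam F' S)\<^sup>2)"
    using near_constant_k_subsets_1[of "\<lambda>S. int (lam F S)"]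
      sum_sq_lam_le_if_sum_sq_deviation_le[OF assms(1-3)] by blast+
qed

theorem theorem2p3:
  fixes V :: "'a set" and F F' :: "'a set list" and x :: real
  assumes "C1_pair (card V) (length F) \<or> C2_pair (card V) (length F)"
    and "NWBTS V F"
    and "TS V F'" and "length F' = length F"
    and "x \<ge> 1"
  shows "Ppoly F x \<le> Ppoly F' x"
proof -
  \<comment> \<open>The (C1)/(C2) hypothesis is already part of NWBTS.\<close>
  have TS: "TS V F" and bal: "balanced 3 V F" and nb: "nearly_2_balanced V F"
    using assms(2) unfolding NWBTS_def by auto
  note near_constant_le = sum_sq_lam_le_if_near_constant[OF TS assms(3,4)]
  have "(\<Sum>S\<in>k_subsets V k. (lam F S)\<^sup>2) \<le> (\<Sum>S\<in>k_subsets V k. (lam F' S)\<^sup>2)"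
    if k: "k \<le> 3" for k
  proof -
    consider "k = 0" | "k = 1" | "k = 2" | "k = 3" using k by linarith
    then show ?thesis
    proof cases
      case 1
      then show ?thesis
        using near_constant_le near_constant_k_subsets_0[OF TS_finite[OF TS]] by simp
    next
      case 2
      then show ?thesis
        using near_constant_le nearly_2_balanced_near_optimal(1)[OF TS assms(3,4) nb] by simp
    next
      case 3
      then show ?thesis using nearly_2_balanced_near_optimal(2)[OF TS assms(3,4) nb] by simp
    next
      case 4
      then show ?thesis using near_constant_le near_constant_if_balanced[OF TS bal] by simp
    qed
  qed
  then show ?thesis by (rule Ppoly_le_of_sum_sq_lam_le[OF TS assms(3-5)])
qed

end
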